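(* (Hyperdense coding with local continuous reversibility but without tomographic locality.) Let $N\ge2$, $n=2^N-1$, $m\ge1$. Let $\Omega_A=\Omega_B=\Omega^{(n)}_m$ with local effect set $\mathcal E_{\mathrm{loc}}$, local transformations $\mathcal T=\{T^{(R)}_\mu\}$, entangled states $\Phi_\mu$, joint state space $\Omega_{AB}$ and effects $F_y$ as in the context. Then: (a) $\Lambda:=\{T\Phi_{\mathbf 0}T'^{\mathrm t}:T,T'\in\mathcal T\}=\{\Phi_\mu\}_{\mu\in\{0,1\}^N}$, and $\Omega_A\otimes_{\min}\Omega_B\subseteq\Omega_{AB}\subseteq\Omega_A\otimes_{\max}\Omega_B$; (b) every $T\in\mathcal T$ maps $\Omega_A$ into itself and $\Omega_{AB}$ into itself (acting on either side), and any two pure local states are connected by elements of $\mathcal T$ depending continuously on an $\mathrm{SO}(m)$ parameter; (c) $(e\otimes f)\cdot\Phi_\mu$ does not depend on $\mu$ for any $e,f\in\mathcal E_{\mathrm{loc}}$, although the $\Phi_\mu$ are pairwise distinct (tomographic locality fails); (d) each $F_y$ lies in $\mathcal E_{AB}$, $\sum_yF_y=u\otimes u$, and $F_y\cdot(T^{(R)}_x\Phi_{\mathbf 0})=F_y\cdot\Phi_x=\delta_{y,x}$; hence the dense coding protocol (shared $\Phi_{\mathbf 0}$, encoding by $T^{(R)}_x$, decoding by $\{F_y\}$, uniform $x\in\{0,1\}^N$) achieves $I(X:Y)=N$, while the classical capacity of each local system is $1$ bit.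
   Context: $\Omega^{(n)}_m=\{(1,\mathbf 0,r)^{\mathrm t}:\mathbf 0\in\mathbb R^n,\ r\in\mathbb R^m,\ \lVert r\rVert\le1\}\subset\mathbb R^{1+n+m}$, unit effect $u=(1,\mathbf 0)^{\mathrm t}$ (zero in $\mathbb R^{n+m}$), local effect set $\mathcal E_{\mathrm{loc}}=$ convex hull of the zero vector, $u$, and $\tfrac12(1,\mathbf 0,r)^{\mathrm t}$ for unit $r\in\mathbb R^m$. Classical capacity is defined as the supremum of $I(X:Y)$ over finite message distributions, states and measurements (families in $\mathcal E_{\mathrm{loc}}$ summing to $u$) with $p(y|x)=e_y\cdot\omega_x$. Bipartite states are real $(1+n+m)\times(1+n+m)$ matrices, identified with tensors via $v\otimes w=vw^{\mathrm t}$, inner product $X\cdot Y=\mathrm{Tr}(X^{\mathrm t}Y)$; $\Omega_A\otimes_{\min}\Omega_B$ is the convex hull of product states; $\Omega_A\otimes_{\max}\Omega_B=\{\phi:(u\otimes u)\cdot\phi=1,(e\otimes f)\cdot\phi\ge0\ \forall e,f\in\mathcal E_{\mathrm{loc}}\}$. Coordinates of $\mathbb R^{2^N}$ are indexed by $\nu\in\{0,1\}^N$ with $\nu=\mathbf 0$ first; $(d_\mu)_\nu=(-1)^{\mu\cdot\nu}$ ($\mu\cdot\nu$ = inner product mod 2); $\phi_\mu=T_\mu=\mathrm{diag}(d_\mu)$ ($2^N\times2^N$), $E_\mu=2^{-N}\phi_\mu$. Define $T^{(R)}_\mu=\begin{pmatrix}T_\mu&0\\0&R\end{pmatrix}$ for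 $R\in\mathrm{SO}(m)$ and $\mu\in\{0,1\}^N$, $\mathcal T=\{T^{(R)}_\mu\}$; $\Phi_\mu=\begin{pmatrix}\phi_\mu&0\\0&0\end{pmatrix}$ (zero $m\times m$ block); $\Omega_{AB}=$ convex hull of $\Omega_A\otimes_{\min}\Omega_B\cup\Lambda$; $\mathcal E_{AB}=\{E:0\le E\cdot\phi\le1\ \forall\phi\in\Omega_{AB}\}$; $F_y=2^{-N}\Phi_y$. Local transformations act on $A$ as $\phi\mapsto T\phi$ and on $B$ as $\phi\mapsto\phi T^{\mathrm t}$. *)

theory Defs
  imports "HOL-Analysis.Analysis" "HOL-Library.Function_Algebras"
begin

instantiation "fun" :: (type, real_vector) real_vector
begin
definition scaleR_fun :: "real \<Rightarrow> ('a \<Rightarrow> 'b) \<Rightarrow> 'a \<Rightarrow> 'b"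
  where "scaleR_fun c f = (\<lambda>x. c *\<^sub>R f x)"
instance
  by standard (auto simp: scaleR_fun_def fun_eq_iff scaleR_add_right scaleR_add_left)
end

text \<open>Vectors of R^(1+n+m) = R^(2^N+m) are functions nat => real that vanish at indices
  >= 2^N+m; matrices are functions nat => nat => real vanishing outside the index square.
  The coordinate indexed by nu in {0,1}^N is the natural number k < 2^N whose binary digits
  are nu (so nu = 0 is index 0, coming first); the last m coordinates are 2^N, ..., 2^N+m-1.\<close>

definition dimD :: "nat \<Rightarrow> nat \<Rightarrow> nat" where
  "dimD N m = 2^N + m"

text \<open>mu . nu (mod 2 inner product) realised via the parity of common one bits.\<close>
definition bdot :: "nat \<Rightarrow> nat \<Rightarrow> nat \<Rightarrow> nat" where
  "bdot N mu nu = card {i. i < N \<and> bit mu i \<and> bit nu i}"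

definition dvec :: "nat \<Rightarrow> nat \<Rightarrow> nat \<Rightarrow> real" where
  "dvec N mu = (\<lambda>k. if k < 2^N then (-1) ^ bdot N mu k else 0)"

definition supp_vec :: "nat \<Rightarrow> (nat \<Rightarrow> real) \<Rightarrow> bool" where
  "supp_vec D v \<longleftrightarrow> (\<forall>i. D \<le> i \<longrightarrow> v i = 0)"

definition supp_mat :: "nat \<Rightarrow> (nat \<Rightarrow> nat \<Rightarrow> real) \<Rightarrow> bool" where
  "supp_mat D X \<longleftrightarrow> (\<forall>i j. D \<le> i \<or> D \<le> j \<longrightarrow> X i j = 0)"

definition vdot :: "nat \<Rightarrow> (nat \<Rightarrow> real) \<Rightarrow> (nat \<Rightarrow> real) \<Rightarrow> real" where
  "vdot D v w = (\<Sum>i<D. v i * w i)"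

definition mdot :: "nat \<Rightarrow> (nat \<Rightarrow> nat \<Rightarrow> real) \<Rightarrow> (nat \<Rightarrow> nat \<Rightarrow> real) \<Rightarrow> real" where
  "mdot D X Y = (\<Sum>i<D. \<Sum>j<D. X i j * Y i j)"

definition tens :: "(nat \<Rightarrow> real) \<Rightarrow> (nat \<Rightarrow> real) \<Rightarrow> nat \<Rightarrow> nat \<Rightarrow> real" where
  "tens v w = (\<lambda>i j. v i * w j)"

definition mmul :: "nat \<Rightarrow> (nat \<Rightarrow> nat \<Rightarrow> real) \<Rightarrow> (nat \<Rightarrow> nat \<Rightarrow> real) \<Rightarrow> nat \<Rightarrow> nat \<Rightarrow> real" where
  "mmul D A B = (\<lambda>i j. if i < D \<and> j < D then \<Sum>k<D. A i k * B k j else 0)"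

definition mvec :: "nat \<Rightarrow> (nat \<Rightarrow> nat \<Rightarrow> real) \<Rightarrow> (nat \<Rightarrow> real) \<Rightarrow> nat \<Rightarrow> real" where
  "mvec D A v = (\<lambda>i. if i < D then \<Sum>k<D. A i k * v k else 0)"

definition mtrans :: "(nat \<Rightarrow> nat \<Rightarrow> real) \<Rightarrow> nat \<Rightarrow> nat \<Rightarrow> real" where
  "mtrans A = (\<lambda>i j. A j i)"

definition SOm :: "nat \<Rightarrow> (nat \<Rightarrow> nat \<Rightarrow> real) set" where
  "SOm m = {R. supp_mat m R
      \<and> (\<forall>i<m. \<forall>j<m. (\<Sum>k<m. R k i * R k j) = (if i = j then 1 else 0))
      \<and> (\<Sum>p | p permutes {..<m}. of_int (sign p) * (\<Prod>i<m. R i (p i))) = 1}"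

definition idm :: "nat \<Rightarrow> nat \<Rightarrow> nat \<Rightarrow> real" where
  "idm m = (\<lambda>i j. if i = j \<and> i < m then 1 else 0)"

definition omegaL :: "nat \<Rightarrow> nat \<Rightarrow> (nat \<Rightarrow> real) set" where
  "omegaL N m = {v. supp_vec (dimD N m) v \<and> v 0 = 1 \<and> (\<forall>i. 0 < i \<and> i < 2^N \<longrightarrow> v i = 0)
                  \<and> (\<Sum>i<m. (v (2^N + i))^2) \<le> 1}"

definition unitE :: "nat \<Rightarrow> real" where
  "unitE = (\<lambda>i. if i = 0 then 1 else 0)"

definition halfvec :: "nat \<Rightarrow> nat \<Rightarrow> (nat \<Rightarrow> real) \<Rightarrow> nat \<Rightarrow> real" where
  "halfvec N m r = (\<lambda>i. if i = 0 then 1/2 else if 2^N \<le> i \<and> i < dimD N m then r (i - 2^N) / 2 else 0)"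

definition Eloc :: "nat \<Rightarrow> nat \<Rightarrow> (nat \<Rightarrow> real) set" where
  "Eloc N m = convex hull ({0, unitE} \<union> {halfvec N m r | r. (\<Sum>i<m. (r i)^2) = 1})"

definition tmin :: "nat \<Rightarrow> nat \<Rightarrow> (nat \<Rightarrow> nat \<Rightarrow> real) set" where
  "tmin N m = convex hull {tens v w | v w. v \<in> omegaL N m \<and> w \<in> omegaL N m}"

definition tmax :: "nat \<Rightarrow> nat \<Rightarrow> (nat \<Rightarrow> nat \<Rightarrow> real) set" where
  "tmax N m = {phi. supp_mat (dimD N m) phi \<and> mdot (dimD N m) (tens unitE unitE) phi = 1
      \<and> (\<forall>e\<in>Eloc N m. \<forall>f\<in>Eloc N m. 0 \<le> mdot (dimD N m) (tens e f) phi)}"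

definition TR :: "nat \<Rightarrow> nat \<Rightarrow> nat \<Rightarrow> (nat \<Rightarrow> nat \<Rightarrow> real) \<Rightarrow> nat \<Rightarrow> nat \<Rightarrow> real" where
  "TR N m mu R = (\<lambda>i j.
      if i < 2^N \<and> j < 2^N then (if i = j then dvec N mu i else 0)
      else if 2^N \<le> i \<and> i < dimD N m \<and> 2^N \<le> j \<and> j < dimD N m then R (i - 2^N) (j - 2^N)
      else 0)"

definition Tset :: "nat \<Rightarrow> nat \<Rightarrow> (nat \<Rightarrow> nat \<Rightarrow> real) set" where
  "Tset N m = {TR N m mu R | mu R. mu < 2^N \<and> R \<in> SOm m}"

definition Phi :: "nat \<Rightarrow> nat \<Rightarrow> nat \<Rightarrow> nat \<Rightarrow> real" where
  "Phi N mu = (\<lambda>i j. if i = j \<and> i < 2^N then dvec N mu i else 0)"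

definition Lam :: "nat \<Rightarrow> nat \<Rightarrow> (nat \<Rightarrow> nat \<Rightarrow> real) set" where
  "Lam N m = {mmul (dimD N m) (mmul (dimD N m) T (Phi N 0)) (mtrans T') | T T'.
                 T \<in> Tset N m \<and> T' \<in> Tset N m}"

definition OmegaAB :: "nat \<Rightarrow> nat \<Rightarrow> (nat \<Rightarrow> nat \<Rightarrow> real) set" where
  "OmegaAB N m = convex hull (tmin N m \<union> Lam N m)"

definition EAB :: "nat \<Rightarrow> nat \<Rightarrow> (nat \<Rightarrow> nat \<Rightarrow> real) set" where
  "EAB N m = {E. supp_mat (dimD N m) E \<and>
      (\<forall>phi\<in>OmegaAB N m. 0 \<le> mdot (dimD N m) E phi \<and> mdot (dimD N m) E phi \<le> 1)}"

definition Fy :: "nat \<Rightarrow> nat \<Rightarrow> nat \<Rightarrow> nat \<Rightarrow> real" where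
  "Fy N y = (1 / 2^N) *\<^sub>R Phi N y"

text \<open>I(X:Y) for messages x < k with distribution p and outcomes y < l with p(y|x) = W x y.
  Terms with p(x) p(y|x) = 0 contribute 0 (note log 2 0 = 0 and x/0 = 0 in HOL).\<close>
definition mutual_info :: "nat \<Rightarrow> nat \<Rightarrow> (nat \<Rightarrow> real) \<Rightarrow> (nat \<Rightarrow> nat \<Rightarrow> real) \<Rightarrow> real" where
  "mutual_info k l p W =
     (\<Sum>x<k. \<Sum>y<l. p x * W x y * log 2 (W x y / (\<Sum>x'<k. p x' * W x' y)))"

definition capacity :: "('s set) \<Rightarrow> ('s set) \<Rightarrow> 's::ab_group_add \<Rightarrow> ('s \<Rightarrow> 's \<Rightarrow> real) \<Rightarrow> real" where
  "capacity S E u ip = Sup {mutual_info k l p (\<lambda>x y. ip (e y) (omega x)) | k l p omega e.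
       0 < k \<and> (\<forall>x<k. 0 \<le> p x) \<and> (\<Sum>x<k. p x) = 1 \<and> (\<forall>x<k. omega x \<in> S)
       \<and> (\<forall>y<l. e y \<in> E) \<and> (\<Sum>y<l. e y) = u}"

end

theory Submission
  imports Defs "Jordan_Normal_Form.Determinant"
begin

text \<open>The characters \<open>d\<^sub>\<mu>\<close> of the group of bit strings satisfy \<open>d\<^sub>\<mu> d\<^sub>\<nu> = d\<^sub>\<mu>\<^sub>\<oplus>\<^sub>\<nu>\<close> and
  \<open>\<Sum>\<^sub>k d\<^sub>\<mu>(k) = 2^N \<delta>\<^sub>\<mu>\<^sub>0\<close>. Hence a local map \<open>T\<^sub>\<mu>\<close> sends \<open>\<Phi>\<^sub>\<nu>\<close> to \<open>\<Phi>\<^sub>\<mu>\<^sub>\<oplus>\<^sub>\<nu>\<close>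
  (on either side), while \<open>\<Phi>\<^sub>y \<cdot> \<Phi>\<^sub>x = 2^N \<delta>\<^sub>y\<^sub>x\<close>: the effects \<open>F\<^sub>y = 2\<^sup>-\<^sup>N \<Phi>\<^sub>y\<close> decode \<open>N\<close> bits
  that Alice wrote into the shared state \<open>\<Phi>\<^sub>0\<close> by a local operation alone. Local effects only see
  the unit coordinate and the Bloch block, where all \<open>\<Phi>\<^sub>\<mu>\<close> agree, so product measurements
  cannot tell them apart. Locally every effect satisfies \<open>0 \<le> e \<cdot> \<omega> \<le> 2 e\<^sub>0\<close> and the \<open>e\<^sub>0\<close> of a
  measurement sum to \<open>1\<close>, which by Gibbs' inequality caps the information of a local channel at
  one bit. Pure local states have unit Bloch vectors and are joined by rotations in the plane
  spanned by the two vectors.\<close>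

section \<open>Characters of the group of bit strings\<close>

lemma bdot_commute: "bdot N a b = bdot N b a"
  unfolding bdot_def by (metis (mono_tags) conj_commute)

lemma bdot_0 [simp]: "bdot N 0 k = 0" "bdot N k 0 = 0"
  unfolding bdot_def by auto

lemma card_sym_diff:
  assumes "finite A" "finite B"
  shows "card ((A - B) \<union> (B - A)) + 2 * card (A \<inter> B) = card A + card B"
proof -
  have "(A - B) \<union> (B - A) \<union> (A \<inter> B) = A \<union> B" "((A - B) \<union> (B - A)) \<inter> (A \<inter> B) = {}" by blast+
  then have "card ((A - B) \<union> (B - A)) + card (A \<inter> B) = card (A \<union> B)"
    using assms card_Un_disjoint[of "(A - B) \<union> (B - A)" "A \<inter> B"] by simp
  then show ?thesis using card_Un_Int[OF assms] by simp
qed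

lemma minus_one_power_bdot_xor:
  "(-1::real) ^ bdot N a (xor b c) = (-1) ^ bdot N a b * (-1) ^ bdot N a c"
proof -
  define A where "A = {i. i < N \<and> bit a i \<and> bit b i}"
  define B where "B = {i. i < N \<and> bit a i \<and> bit c i}"
  have fin: "finite A" "finite B" unfolding A_def B_def by auto
  have "{i. i < N \<and> bit a i \<and> bit (xor b c) i} = (A - B) \<union> (B - A)"
    unfolding A_def B_def by (auto simp: bit_xor_iff)
  then have card: "bdot N a (xor b c) + 2 * card (A \<inter> B) = bdot N a b + bdot N a c"
    unfolding bdot_def using card_sym_diff[OF fin] unfolding A_def B_def by simp
  have "(-1::real) ^ (bdot N a b + bdot N a c) = (-1) ^ bdot N a (xor b c) * ((-1)^2) ^ card (A \<inter> B)"
    unfolding card[symmetric] power_add power_mult by simp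
  then show ?thesis by (simp add: power_add)
qed

lemma xor_less_power: "(a::nat) < 2^N \<Longrightarrow> b < 2^N \<Longrightarrow> xor a b < 2^N"
  by (metis take_bit_nat_eq_self_iff take_bit_xor)

lemma xor_eq_0_iff: "xor (a::nat) b = 0 \<longleftrightarrow> a = b"
proof
  assume "xor a b = 0"
  then have "bit a n = bit b n" for n
    using bit_xor_iff[of a b n] by auto
  then show "a = b" by (simp add: bit_eq_iff)
qed simp

lemma dvec_mult: "k < 2^N \<Longrightarrow> dvec N a k * dvec N b k = dvec N (xor a b) k"
  unfolding dvec_def by (simp add: bdot_commute[of N _ k] minus_one_power_bdot_xor)

lemma dvec_commute: "k < 2^N \<Longrightarrow> j < 2^N \<Longrightarrow> dvec N j k = dvec N k j"
  unfolding dvec_def by (simp add: bdot_commute)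

lemma dvec_0 [simp]: "k < 2^N \<Longrightarrow> dvec N 0 k = 1" "dvec N mu 0 = 1"
  unfolding dvec_def by auto

lemma bdot_power_of_two: "j < N \<Longrightarrow> bit y j \<Longrightarrow> bdot N y (2^j) = 1"
proof -
  assume "j < N" "bit y j"
  then have "{i. i < N \<and> bit y i \<and> bit ((2::nat)^j) i} = {j}" by (auto simp: bit_exp_iff)
  then show ?thesis unfolding bdot_def by simp
qed

text \<open>Flipping a bit \<open>j\<close> of the argument on which \<open>y\<close> has a one negates \<open>d\<^sub>y\<close>, so the sum cancels.\<close>

lemma sum_dvec:
  assumes y: "y < 2^N"
  shows "(\<Sum>k<2^N. dvec N y k) = (if y = 0 then 2^N else 0)"
proof (cases "y = 0")
  case False
  then obtain j where bj: "bit y j" using bit_eq_iff[of y 0] by auto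
  have jN: "j < N"
  proof (rule ccontr)
    assume "\<not> j < N"
    then have "\<not> bit (take_bit N y) j" by (simp add: bit_take_bit_iff)
    then show False using bj y by (simp add: take_bit_nat_eq_self)
  qed
  define s where "s = (\<lambda>k::nat. xor k (2^j))"
  have s_s: "s (s k) = k" for k unfolding s_def by (rule bit_eqI) (auto simp: bit_xor_iff)
  have s_less: "k < 2^N \<Longrightarrow> s k < 2^N" for k
    unfolding s_def using xor_less_power[of k N "2^j"] jN by simp
  have neg: "k < 2^N \<Longrightarrow> dvec N y (s k) = - dvec N y k" for k
    using s_less[of k] unfolding dvec_def s_def
    by (simp add: minus_one_power_bdot_xor bdot_power_of_two[OF jN bj])
  have "(\<Sum>k<2^N. dvec N y (s k)) = (\<Sum>k<2^N. dvec N y k)"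
    by (rule sum.reindex_bij_witness[where i=s and j=s]) (auto simp: s_s s_less)
  then have "(\<Sum>k<2^N. dvec N y k) = - (\<Sum>k<2^N. dvec N y k)"
    using neg by (simp add: sum_negf)
  then show ?thesis using False by simp
qed simp

lemma scaleR_fun_apply [simp]: "(c *\<^sub>R f) x = c *\<^sub>R f x"
  by (simp add: scaleR_fun_def)

lemma sum_fun_apply: "(\<Sum>y\<in>A. F y) x = (\<Sum>y\<in>A. F y x)"
  by (induction A rule: infinite_finite_induct) auto

lemma sum_lessThan_add:
  fixes f :: "nat \<Rightarrow> 'a::comm_monoid_add"
  shows "(\<Sum>i<a + m. f i) = (\<Sum>i<a. f i) + (\<Sum>j<m. f (a + j))"
  by (induction m) (auto simp: add.assoc)

lemma vdot_lin: "vdot D (u *\<^sub>R x + v *\<^sub>R y) w = u * vdot D x w + v * vdot D y w"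
  by (simp add: vdot_def sum_distrib_left sum.distrib algebra_simps)

lemma vdot_sum: "vdot D (\<Sum>y\<in>A. e y) w = (\<Sum>y\<in>A. vdot D (e y) w)"
  unfolding vdot_def sum_fun_apply by (simp add: sum_distrib_right sum.swap[of _ "{..<D}"])

lemma mdot_lin: "mdot D X (u *\<^sub>R A + v *\<^sub>R B) = u * mdot D X A + v * mdot D X B"
  by (simp add: mdot_def sum_distrib_left sum.distrib algebra_simps)

lemma mdot_scaleR_left: "mdot D (c *\<^sub>R X) Y = c * mdot D X Y"
  by (simp add: mdot_def sum_distrib_left algebra_simps)

lemma mdot_commute: "mdot D X Y = mdot D Y X"
  by (simp add: mdot_def mult.commute)

lemma mdot_tens_tens: "mdot D (tens a b) (tens c d) = vdot D a c * vdot D b d"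
  by (simp add: mdot_def vdot_def tens_def sum_product algebra_simps)

lemma mmul_lin_left: "mmul D T (u *\<^sub>R A + v *\<^sub>R B) = u *\<^sub>R mmul D T A + v *\<^sub>R mmul D T B"
  by (auto simp: mmul_def sum_distrib_left sum.distrib algebra_simps intro!: ext)

lemma mmul_lin_right: "mmul D (u *\<^sub>R A + v *\<^sub>R B) M = u *\<^sub>R mmul D A M + v *\<^sub>R mmul D B M"
  by (auto simp: mmul_def sum_distrib_left sum.distrib algebra_simps intro!: ext)

lemma convex_real_interval_preimage:
  assumes "\<And>x y u v. f (u *\<^sub>R x + v *\<^sub>R y) = u * f x + v * f y"
  shows "convex {x. 0 \<le> f x \<and> f x \<le> 1}"
proof (rule convexI)
  fix x y and u v :: real
  assume "x \<in> {x. 0 \<le> f x \<and> f x \<le> 1}" "y \<in> {x. 0 \<le> f x \<and> f x \<le> 1}" "0 \<le> u" "0 \<le> v" "u + v = 1"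
  moreover have "u * f x \<le> u" "v * f y \<le> v"
    using calculation by (simp_all add: mult_left_le)
  ultimately show "u *\<^sub>R x + v *\<^sub>R y \<in> {x. 0 \<le> f x \<and> f x \<le> 1}" by (simp add: assms)
qed

definition ldet :: "nat \<Rightarrow> (nat \<Rightarrow> nat \<Rightarrow> real) \<Rightarrow> real" where
  "ldet m R = (\<Sum>p | p permutes {..<m}. of_int (sign p) * (\<Prod>i<m. R i (p i)))"

definition to_mat :: "nat \<Rightarrow> (nat \<Rightarrow> nat \<Rightarrow> real) \<Rightarrow> real mat" where
  "to_mat m R = mat m m (\<lambda>(i,j). R i j)"

lemma ldet_eq_det: "ldet m R = det (to_mat m R)"
proof -
  have "det (to_mat m R) = (\<Sum>p \<in> {p. p permutes {0..<m}}. signof p * (\<Prod>i = 0..<m. to_mat m R $$ (i, p i)))"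
    unfolding det_def to_mat_def by simp
  also have "\<dots> = (\<Sum>p \<in> {p. p permutes {..<m}}. of_int (sign p) * (\<Prod>i<m. R i (p i)))"
  proof (rule sum.cong)
    show "{p. p permutes {0..<m}} = {p. p permutes {..<m}}" by (simp add: atLeast0LessThan)
  next
    fix p assume "p \<in> {p. p permutes {..<m}}"
    then have p: "p permutes {..<m}" by simp
    have "(\<Prod>i = 0..<m. to_mat m R $$ (i, p i)) = (\<Prod>i<m. R i (p i))"
      unfolding atLeast0LessThan
      by (rule prod.cong) (use permutes_in_image[OF p] in \<open>auto simp: to_mat_def\<close>)
    then show "signof p * (\<Prod>i = 0..<m. to_mat m R $$ (i, p i)) = of_int (sign p) * (\<Prod>i<m. R i (p i))"
      by simp
  qed
  finally show ?thesis unfolding ldet_def by simp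
qed

lemma ldet_orthogonal_square:
  assumes "\<And>i j. i < m \<Longrightarrow> j < m \<Longrightarrow> (\<Sum>k<m. R k i * R k j) = (if i = j then 1 else 0)"
  shows "ldet m R * ldet m R = 1"
proof -
  let ?M = "to_mat m R"
  have M: "?M \<in> carrier_mat m m" unfolding to_mat_def by simp
  have "transpose_mat ?M * ?M = 1\<^sub>m m"
  proof (rule eq_matI)
    fix i j assume "i < dim_row (1\<^sub>m m)" "j < dim_col (1\<^sub>m m)"
    then have ij: "i < m" "j < m" by auto
    have "(transpose_mat ?M * ?M) $$ (i, j) = (\<Sum>k = 0..<m. R k i * R k j)"
      using ij by (simp add: scalar_prod_def to_mat_def)
    also have "\<dots> = (if i = j then 1 else 0)" using assms ij by (simp add: atLeast0LessThan)
    finally show "(transpose_mat ?M * ?M) $$ (i, j) = 1\<^sub>m m $$ (i, j)" using ij by simp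
  qed (auto simp: to_mat_def)
  then have "det ?M * det ?M = 1"
    using det_mult[of "transpose_mat ?M" m ?M] M det_transpose[OF M] by simp
  then show ?thesis unfolding ldet_eq_det .
qed

lemma SOm_iff: "R \<in> SOm m \<longleftrightarrow> supp_mat m R
      \<and> (\<forall>i<m. \<forall>j<m. (\<Sum>k<m. R k i * R k j) = (if i = j then 1 else 0)) \<and> ldet m R = 1"
  unfolding SOm_def ldet_def by simp

lemma SOm_orthogonal:
  "R \<in> SOm m \<Longrightarrow> i < m \<Longrightarrow> j < m \<Longrightarrow> (\<Sum>k<m. R k i * R k j) = (if i = j then 1 else 0)"
  unfolding SOm_def by auto

lemma sum_idm_mult: "i < m \<Longrightarrow> (\<Sum>k<m. idm m k i * x k) = x i"
proof -
  have "(\<Sum>k<m. idm m k i * x k) = (\<Sum>k<m. if k = i then x i else 0)"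
    by (rule sum.cong) (auto simp: idm_def)
  then show "i < m \<Longrightarrow> ?thesis" by simp
qed

lemma sum_mult_idm: "i < m \<Longrightarrow> (\<Sum>k<m. x k * idm m k i) = x i"
  using sum_idm_mult[of i m x] by (simp add: mult.commute)

lemma sum_idm_mult_idm: "i < m \<Longrightarrow> j < m \<Longrightarrow> (\<Sum>k<m. idm m k i * idm m k j) = (if i = j then 1 else 0)"
  using sum_idm_mult[of i m "\<lambda>k. idm m k j"] by (simp add: idm_def)

lemma idm_SOm: "idm m \<in> SOm m"
proof -
  have "to_mat m (idm m) = 1\<^sub>m m"
    by (rule eq_matI) (auto simp: to_mat_def idm_def)
  then have "ldet m (idm m) = 1" by (simp add: ldet_eq_det)
  moreover have "supp_mat m (idm m)" by (simp add: supp_mat_def idm_def)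
  ultimately show ?thesis
    unfolding SOm_iff using sum_idm_mult_idm by blast
qed

definition vanishes_mid :: "nat \<Rightarrow> nat \<Rightarrow> (nat \<Rightarrow> real) \<Rightarrow> bool" where
  "vanishes_mid N m e \<longleftrightarrow> (\<forall>i. 0 < i \<and> i < 2^N \<longrightarrow> e i = 0) \<and> (\<forall>i. dimD N m \<le> i \<longrightarrow> e i = 0)"

lemma vanishes_mid_halfvec: "vanishes_mid N m (halfvec N m r)"
  unfolding vanishes_mid_def halfvec_def dimD_def by auto

lemma vanishes_mid_unitE: "vanishes_mid N m unitE"
  unfolding vanishes_mid_def unitE_def dimD_def by auto

lemma omegaL_D:
  assumes "v \<in> omegaL N m"
  shows "v 0 = 1" "vanishes_mid N m v" "(\<Sum>i<m. (v (2^N + i))^2) \<le> 1"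
  using assms unfolding omegaL_def vanishes_mid_def supp_vec_def by auto

lemma vdot_vanishes_mid:
  assumes "vanishes_mid N m e"
  shows "vdot (dimD N m) e v = e 0 * v 0 + (\<Sum>j<m. e (2^N + j) * v (2^N + j))"
proof -
  have "(\<Sum>i<2^N. e i * v i) = (\<Sum>i<(2::nat)^N. if i = 0 then e 0 * v 0 else 0)"
    by (rule sum.cong) (use assms in \<open>auto simp: vanishes_mid_def\<close>)
  then show ?thesis unfolding vdot_def dimD_def sum_lessThan_add by simp
qed

lemma vdot_halfvec:
  assumes "v \<in> omegaL N m"
  shows "vdot (dimD N m) (halfvec N m r) v = 1/2 + (\<Sum>j<m. r j * v (2^N + j)) / 2"
  using vdot_vanishes_mid[OF vanishes_mid_halfvec, of N m r v] omegaL_D[OF assms]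
  by (simp add: halfvec_def dimD_def sum_divide_distrib)

lemma vdot_unitE:
  assumes "v \<in> omegaL N m"
  shows "vdot (dimD N m) unitE v = 1"
  using vdot_vanishes_mid[OF vanishes_mid_unitE, of N m v] omegaL_D[OF assms] by (simp add: unitE_def)

lemma abs_sum_mult_le_1:
  fixes r s :: "nat \<Rightarrow> real"
  assumes "(\<Sum>i<m. (r i)^2) = 1" "(\<Sum>i<m. (s i)^2) \<le> 1"
  shows "\<bar>\<Sum>i<m. r i * s i\<bar> \<le> 1"
proof -
  have "(\<Sum>i<m. r i * s i)^2 \<le> 1"
    using Cauchy_Schwarz_ineq_sum[of r s "{..<m}"] assms by simp
  then show ?thesis by (simp add: abs_square_le_1)
qed

lemma Eloc_subset_convex:
  assumes "convex C" "0 \<in> C" "unitE \<in> C" "\<And>r. (\<Sum>i<m. (r i)^2) = 1 \<Longrightarrow> halfvec N m r \<in> C"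
  shows "Eloc N m \<subseteq> C"
  unfolding Eloc_def by (rule hull_minimal) (use assms in auto)

text \<open>The bound by twice the unit component is what limits the local capacity to one bit.\<close>

lemma Eloc_D:
  assumes "e \<in> Eloc N m"
  shows "vanishes_mid N m e" "0 \<le> e 0" "e 0 \<le> 1"
    and "v \<in> omegaL N m \<Longrightarrow> 0 \<le> vdot (dimD N m) e v"
    and "v \<in> omegaL N m \<Longrightarrow> vdot (dimD N m) e v \<le> 2 * e 0"
proof -
  let ?C = "{e. vanishes_mid N m e \<and> 0 \<le> e 0 \<and> e 0 \<le> 1
     \<and> (\<forall>v\<in>omegaL N m. 0 \<le> vdot (dimD N m) e v \<and> vdot (dimD N m) e v \<le> 2 * e 0)}"
  have "Eloc N m \<subseteq> ?C"
  proof (rule Eloc_subset_convex)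
    show "convex ?C"
    proof (rule convexI)
      fix x y :: "nat \<Rightarrow> real" and u v :: real
      assume x: "x \<in> ?C" and y: "y \<in> ?C" and uv: "0 \<le> u" "0 \<le> v" "u + v = 1"
      have "u * x 0 \<le> u" "v * y 0 \<le> v" using x y uv by (simp_all add: mult_left_le)
      moreover have "u * vdot (dimD N m) x w \<le> u * (2 * x 0)" "v * vdot (dimD N m) y w \<le> v * (2 * y 0)"
        if "w \<in> omegaL N m" for w
        using x y uv that by (simp_all add: mult_left_mono)
      ultimately show "u *\<^sub>R x + v *\<^sub>R y \<in> ?C"
        using x y uv by (fastforce simp: vanishes_mid_def vdot_lin algebra_simps)
    qed
  next
    show "0 \<in> ?C" by (simp add: vanishes_mid_def vdot_def)
  next
    show "unitE \<in> ?C" using vanishes_mid_unitE vdot_unitE by (simp add: unitE_def)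
  next
    fix r :: "nat \<Rightarrow> real" assume r: "(\<Sum>i<m. (r i)^2) = 1"
    have "0 \<le> vdot (dimD N m) (halfvec N m r) v \<and> vdot (dimD N m) (halfvec N m r) v \<le> 1"
      if v: "v \<in> omegaL N m" for v
      using abs_sum_mult_le_1[OF r omegaL_D(3)[OF v]] unfolding vdot_halfvec[OF v] by linarith
    then show "halfvec N m r \<in> ?C" using vanishes_mid_halfvec by (simp add: halfvec_def)
  qed
  then show "vanishes_mid N m e" "0 \<le> e 0" "e 0 \<le> 1"
    and "v \<in> omegaL N m \<Longrightarrow> 0 \<le> vdot (dimD N m) e v"
    and "v \<in> omegaL N m \<Longrightarrow> vdot (dimD N m) e v \<le> 2 * e 0"
    using assms by blast+
qed

section \<open>The entangled states\<close>

lemma mmul_TR_Phi: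
  assumes "a < 2^N"
  shows "mmul (dimD N m) (TR N m a R) (Phi N mu) = Phi N (xor a mu)"
proof (intro ext)
  fix i j
  show "mmul (dimD N m) (TR N m a R) (Phi N mu) i j = Phi N (xor a mu) i j"
  proof (cases "i < dimD N m \<and> j < dimD N m")
    case True
    have "(\<Sum>k<dimD N m. TR N m a R i k * Phi N mu k j)
        = (\<Sum>k<dimD N m. if k = j then TR N m a R i j * (if j < 2^N then dvec N mu j else 0) else 0)"
      by (rule sum.cong) (auto simp: Phi_def)
    also have "\<dots> = Phi N (xor a mu) i j"
      using True assms by (auto simp: TR_def Phi_def dvec_mult[symmetric])
    finally show ?thesis using True by (simp add: mmul_def)
  qed (auto simp: mmul_def Phi_def dimD_def)
qed

lemma mmul_Phi_mtrans_TR: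
  assumes "b < 2^N"
  shows "mmul (dimD N m) (Phi N mu) (mtrans (TR N m b R)) = Phi N (xor mu b)"
proof (intro ext)
  fix i j
  show "mmul (dimD N m) (Phi N mu) (mtrans (TR N m b R)) i j = Phi N (xor mu b) i j"
  proof (cases "i < dimD N m \<and> j < dimD N m")
    case True
    have "(\<Sum>k<dimD N m. Phi N mu i k * mtrans (TR N m b R) k j)
        = (\<Sum>k<dimD N m. if k = i then (if i < 2^N then dvec N mu i else 0) * TR N m b R j i else 0)"
      by (rule sum.cong) (auto simp: Phi_def mtrans_def)
    also have "\<dots> = Phi N (xor mu b) i j"
      using True assms by (auto simp: TR_def Phi_def dvec_mult[symmetric])
    finally show ?thesis using True by (simp add: mmul_def)
  qed (auto simp: mmul_def Phi_def dimD_def)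
qed

lemma mmul_TR_Phi_0: "x < 2^N \<Longrightarrow> mmul (dimD N m) (TR N m x R) (Phi N 0) = Phi N x"
  by (simp add: mmul_TR_Phi)

lemma Lam_eq: "Lam N m = {Phi N mu | mu. mu < 2^N}"
proof
  show "Lam N m \<subseteq> {Phi N mu | mu. mu < 2^N}"
  proof
    fix X assume "X \<in> Lam N m"
    then obtain a R b R' where ab: "a < 2^N" "b < 2^N"
      and X: "X = mmul (dimD N m) (mmul (dimD N m) (TR N m a R) (Phi N 0)) (mtrans (TR N m b R'))"
      unfolding Lam_def Tset_def by auto
    then have "X = Phi N (xor a b)" by (simp add: mmul_TR_Phi mmul_Phi_mtrans_TR)
    then show "X \<in> {Phi N mu | mu. mu < 2^N}" using ab xor_less_power by blast
  qed
next
  show "{Phi N mu | mu. mu < 2^N} \<subseteq> Lam N m"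
  proof
    fix X assume "X \<in> {Phi N mu | mu. mu < 2^N}"
    then obtain mu where X: "X = Phi N mu" and mu: "mu < 2^N" by auto
    have "X = mmul (dimD N m) (mmul (dimD N m) (TR N m mu (idm m)) (Phi N 0)) (mtrans (TR N m 0 (idm m)))"
      using mu by (simp add: mmul_TR_Phi mmul_Phi_mtrans_TR X)
    moreover have "TR N m mu (idm m) \<in> Tset N m" "TR N m 0 (idm m) \<in> Tset N m"
      using mu idm_SOm unfolding Tset_def by force+
    ultimately show "X \<in> Lam N m" unfolding Lam_def by blast
  qed
qed

lemma mdot_tens_Phi:
  assumes "vanishes_mid N m e" "vanishes_mid N m f"
  shows "mdot (dimD N m) (tens e f) (Phi N mu) = e 0 * f 0"
proof -
  have "mdot (dimD N m) (tens e f) (Phi N mu)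
      = (\<Sum>i<dimD N m. \<Sum>j<dimD N m. if j = i then e i * f i * (if i < 2^N then dvec N mu i else 0) else 0)"
    unfolding mdot_def by (intro sum.cong) (auto simp: tens_def Phi_def)
  also have "\<dots> = (\<Sum>i<dimD N m. if i = 0 then e 0 * f 0 else 0)"
    by (rule sum.cong) (use assms in \<open>auto simp: vanishes_mid_def\<close>)
  finally show ?thesis by (simp add: dimD_def)
qed

lemma mdot_Phi_Phi:
  assumes "y < 2^N" "x < 2^N"
  shows "mdot (dimD N m) (Phi N y) (Phi N x) = (if y = x then 2^N else 0)"
proof -
  have "mdot (dimD N m) (Phi N y) (Phi N x)
      = (\<Sum>i<dimD N m. \<Sum>j<dimD N m. if j = i then (if i < 2^N then dvec N y i * dvec N x i else 0) else 0)"
    unfolding mdot_def by (intro sum.cong) (auto simp: Phi_def)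
  also have "\<dots> = (\<Sum>i<(2::nat)^N. dvec N (xor y x) i)"
    unfolding dimD_def sum_lessThan_add by (simp add: dvec_mult)
  also have "\<dots> = (if y = x then 2^N else 0)"
    using sum_dvec[OF xor_less_power[OF assms]] by (simp add: xor_eq_0_iff)
  finally show ?thesis .
qed

lemma Phi_inj: "y < 2^N \<Longrightarrow> x < 2^N \<Longrightarrow> Phi N y = Phi N x \<Longrightarrow> y = x"
  using mdot_Phi_Phi[of y N y m] mdot_Phi_Phi[of y N x m] by (metis zero_neq_numeral power_not_zero)

lemma OmegaAB_subset_convex:
  assumes "convex C" "\<And>v w. v \<in> omegaL N m \<Longrightarrow> w \<in> omegaL N m \<Longrightarrow> tens v w \<in> C"
    "\<And>mu. mu < 2^N \<Longrightarrow> Phi N mu \<in> C"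
  shows "OmegaAB N m \<subseteq> C"
  unfolding OmegaAB_def
proof (rule hull_minimal)
  have "tmin N m \<subseteq> C" unfolding tmin_def by (rule hull_minimal) (use assms in auto)
  then show "tmin N m \<union> Lam N m \<subseteq> C" unfolding Lam_eq using assms(3) by blast
qed (rule assms(1))

lemma tens_OmegaAB: "v \<in> omegaL N m \<Longrightarrow> w \<in> omegaL N m \<Longrightarrow> tens v w \<in> OmegaAB N m"
  unfolding OmegaAB_def tmin_def by (rule hull_inc, rule UnI1, rule hull_inc) blast

lemma tmin_subset_OmegaAB: "tmin N m \<subseteq> OmegaAB N m"
  unfolding OmegaAB_def by (meson hull_subset le_supE)

lemma Phi_OmegaAB: "mu < 2^N \<Longrightarrow> Phi N mu \<in> OmegaAB N m"
  unfolding OmegaAB_def by (rule hull_inc, rule UnI2) (auto simp: Lam_eq)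

lemma supp_mat_tens: "vanishes_mid N m v \<Longrightarrow> vanishes_mid N m w \<Longrightarrow> supp_mat (dimD N m) (tens v w)"
  unfolding supp_mat_def vanishes_mid_def tens_def by auto

lemma supp_mat_Phi: "supp_mat (dimD N m) (Phi N mu)"
  unfolding supp_mat_def Phi_def dimD_def by auto

lemma convex_tmax: "convex (tmax N m)"
proof (rule convexI)
  fix x y :: "nat \<Rightarrow> nat \<Rightarrow> real" and u v :: real
  assume "x \<in> tmax N m" "y \<in> tmax N m" "0 \<le> u" "0 \<le> v" "u + v = 1"
  then show "u *\<^sub>R x + v *\<^sub>R y \<in> tmax N m"
    unfolding tmax_def supp_mat_def by (auto simp: mdot_lin)
qed

lemma tens_tmax:
  assumes "v \<in> omegaL N m" "w \<in> omegaL N m"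
  shows "tens v w \<in> tmax N m"
  unfolding tmax_def
  using supp_mat_tens[OF omegaL_D(2)[OF assms(1)] omegaL_D(2)[OF assms(2)]]
    vdot_unitE[OF assms(1)] vdot_unitE[OF assms(2)] Eloc_D(4) assms
  by (auto simp: mdot_tens_tens)

lemma Phi_tmax: "Phi N mu \<in> tmax N m"
  unfolding tmax_def
  using supp_mat_Phi mdot_tens_Phi[OF vanishes_mid_unitE vanishes_mid_unitE]
    mdot_tens_Phi Eloc_D(1,2)
  by (auto simp: unitE_def)

lemma OmegaAB_subset_tmax: "OmegaAB N m \<subseteq> tmax N m"
  by (rule OmegaAB_subset_convex[OF convex_tmax tens_tmax Phi_tmax])

lemma mdot_Phi_tens_omegaL:
  assumes "v \<in> omegaL N m" "w \<in> omegaL N m"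
  shows "mdot (dimD N m) (Phi N y) (tens v w) = 1"
  using mdot_tens_Phi[OF omegaL_D(2)[OF assms(1)] omegaL_D(2)[OF assms(2)]]
    omegaL_D(1)[OF assms(1)] omegaL_D(1)[OF assms(2)]
  by (simp add: mdot_commute)

lemma mdot_Fy_Phi: "y < 2^N \<Longrightarrow> x < 2^N \<Longrightarrow> mdot (dimD N m) (Fy N y) (Phi N x) = (if y = x then 1 else 0)"
  unfolding Fy_def by (simp add: mdot_scaleR_left mdot_Phi_Phi)

lemma Fy_EAB:
  assumes "y < 2^N"
  shows "Fy N y \<in> EAB N m"
proof -
  have "OmegaAB N m \<subseteq> {phi. 0 \<le> mdot (dimD N m) (Fy N y) phi \<and> mdot (dimD N m) (Fy N y) phi \<le> 1}"
  proof (rule OmegaAB_subset_convex)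
    show "convex {phi. 0 \<le> mdot (dimD N m) (Fy N y) phi \<and> mdot (dimD N m) (Fy N y) phi \<le> 1}"
      by (rule convex_real_interval_preimage) (rule mdot_lin)
  next
    fix v w assume "v \<in> omegaL N m" "w \<in> omegaL N m"
    then show "tens v w \<in> {phi. 0 \<le> mdot (dimD N m) (Fy N y) phi \<and> mdot (dimD N m) (Fy N y) phi \<le> 1}"
      by (simp add: Fy_def mdot_scaleR_left mdot_Phi_tens_omegaL)
  qed (use assms in \<open>simp add: mdot_Fy_Phi\<close>)
  moreover have "supp_mat (dimD N m) (Fy N y)"
    using supp_mat_Phi unfolding Fy_def supp_mat_def by simp
  ultimately show ?thesis unfolding EAB_def by blast
qed

lemma sum_Fy: "(\<Sum>y<2^N. Fy N y) = tens unitE unitE"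
proof (intro ext)
  fix i j
  have "(\<Sum>y<(2::nat)^N. Fy N y) i j = (\<Sum>y<(2::nat)^N. Phi N y i j) / 2^N"
    by (simp add: sum_fun_apply Fy_def sum_divide_distrib)
  also have "\<dots> = (if i = j \<and> i < 2^N then (\<Sum>y<(2::nat)^N. dvec N i y) / 2^N else 0)"
  proof (cases "i = j \<and> i < 2^N")
    case False
    then have "\<And>y. Phi N y i j = 0" by (auto simp: Phi_def)
    then show ?thesis using False by auto
  qed (auto simp: Phi_def dvec_commute intro!: sum.cong)
  also have "\<dots> = tens unitE unitE i j"
    by (auto simp: sum_dvec tens_def unitE_def)
  finally show "(\<Sum>y<2^N. Fy N y) i j = tens unitE unitE i j" .
qed

section \<open>Local transformations\<close>

lemma mvec_TR_low:
  assumes "i < 2^N"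
  shows "mvec (dimD N m) (TR N m mu R) v i = dvec N mu i * v i"
proof -
  have "(\<Sum>k<dimD N m. TR N m mu R i k * v k) = (\<Sum>k<dimD N m. if k = i then dvec N mu i * v i else 0)"
    by (rule sum.cong) (use assms in \<open>auto simp: TR_def\<close>)
  then show ?thesis using assms by (simp add: mvec_def dimD_def)
qed

lemma mvec_TR_block:
  assumes "j < m"
  shows "mvec (dimD N m) (TR N m mu R) v (2^N + j) = (\<Sum>l<m. R j l * v (2^N + l))"
proof -
  have "(\<Sum>k<(2::nat)^N. TR N m mu R (2^N + j) k * v k) = 0"
    by (rule sum.neutral) (auto simp: TR_def)
  moreover have "(\<Sum>l<m. TR N m mu R (2^N + j) (2^N + l) * v (2^N + l)) = (\<Sum>l<m. R j l * v (2^N + l))"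
    by (rule sum.cong) (use assms in \<open>auto simp: TR_def dimD_def\<close>)
  ultimately show ?thesis using assms unfolding mvec_def by (simp add: dimD_def sum_lessThan_add)
qed

lemma mvec_beyond_dim: "dimD N m \<le> i \<Longrightarrow> mvec (dimD N m) A v i = 0"
  by (simp add: mvec_def)

lemma SOm_norm_preserving:
  assumes R: "R \<in> SOm m"
  shows "(\<Sum>j<m. (\<Sum>l<m. R j l * s l)^2) = (\<Sum>l<m. (s l)^2)"
proof -
  have "(\<Sum>j<m. (\<Sum>l<m. R j l * s l)^2) = (\<Sum>j<m. \<Sum>l<m. \<Sum>l'<m. s l * s l' * (R j l * R j l'))"
    by (simp add: power2_eq_square sum_product algebra_simps)
  also have "\<dots> = (\<Sum>l<m. \<Sum>l'<m. \<Sum>j<m. s l * s l' * (R j l * R j l'))"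
    by (subst sum.swap, rule sum.cong[OF refl], rule sum.swap)
  also have "\<dots> = (\<Sum>l<m. \<Sum>l'<m. s l * s l' * (\<Sum>j<m. R j l * R j l'))"
    by (simp add: sum_distrib_left)
  also have "\<dots> = (\<Sum>l<m. \<Sum>l'<m. if l' = l then s l * s l else 0)"
    by (intro sum.cong refl) (auto simp: SOm_orthogonal[OF R])
  also have "\<dots> = (\<Sum>l<m. (s l)^2)" by (simp add: power2_eq_square)
  finally show ?thesis .
qed

lemma mvec_TR_omegaL:
  assumes "R \<in> SOm m" and v: "v \<in> omegaL N m"
  shows "mvec (dimD N m) (TR N m mu R) v \<in> omegaL N m"
proof -
  have "(\<Sum>i<m. (mvec (dimD N m) (TR N m mu R) v (2^N + i))^2) = (\<Sum>l<m. (v (2^N + l))^2)"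
    by (simp add: mvec_TR_block SOm_norm_preserving[OF assms(1)])
  then show ?thesis
    using omegaL_D[OF v] unfolding omegaL_def supp_vec_def vanishes_mid_def
    by (auto simp: mvec_beyond_dim mvec_TR_low)
qed

lemma mmul_tens:
  assumes "vanishes_mid N m w"
  shows "mmul (dimD N m) T (tens v w) = tens (mvec (dimD N m) T v) w"
  using assms unfolding vanishes_mid_def
  by (auto simp: mmul_def tens_def mvec_def sum_distrib_right mult.assoc intro!: ext)

lemma mmul_tens_mtrans:
  assumes "vanishes_mid N m v"
  shows "mmul (dimD N m) (tens v w) (mtrans T) = tens v (mvec (dimD N m) T w)"
  using assms unfolding vanishes_mid_def
  by (auto simp: mmul_def tens_def mvec_def mtrans_def sum_distrib_left algebra_simps intro!: ext)

lemma OmegaAB_linear_image: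
  fixes L :: "(nat \<Rightarrow> nat \<Rightarrow> real) \<Rightarrow> (nat \<Rightarrow> nat \<Rightarrow> real)"
  assumes lin: "\<And>A B u v. L (u *\<^sub>R A + v *\<^sub>R B) = u *\<^sub>R L A + v *\<^sub>R L B"
    and "phi \<in> OmegaAB N m"
    and "\<And>v w. v \<in> omegaL N m \<Longrightarrow> w \<in> omegaL N m \<Longrightarrow> L (tens v w) \<in> OmegaAB N m"
    and "\<And>mu. mu < 2^N \<Longrightarrow> L (Phi N mu) \<in> OmegaAB N m"
  shows "L phi \<in> OmegaAB N m"
proof -
  have "OmegaAB N m \<subseteq> {phi. L phi \<in> OmegaAB N m}"
  proof (rule OmegaAB_subset_convex)
    have "convex (OmegaAB N m)" unfolding OmegaAB_def by (rule convex_convex_hull)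
    then show "convex {phi. L phi \<in> OmegaAB N m}"
      unfolding convex_def by (simp add: lin)
  qed (use assms in auto)
  then show ?thesis using assms(2) by blast
qed

lemma mmul_TR_OmegaAB:
  assumes "mu < 2^N" "R \<in> SOm m" "phi \<in> OmegaAB N m"
  shows "mmul (dimD N m) (TR N m mu R) phi \<in> OmegaAB N m"
  using assms(3)
proof (rule OmegaAB_linear_image[OF mmul_lin_left])
  fix v w assume "v \<in> omegaL N m" "w \<in> omegaL N m"
  then show "mmul (dimD N m) (TR N m mu R) (tens v w) \<in> OmegaAB N m"
    by (simp add: mmul_tens omegaL_D(2) tens_OmegaAB mvec_TR_omegaL[OF assms(2)])
next
  fix nu :: nat assume "nu < 2^N"
  then show "mmul (dimD N m) (TR N m mu R) (Phi N nu) \<in> OmegaAB N m"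
    using assms(1) by (simp add: mmul_TR_Phi Phi_OmegaAB xor_less_power)
qed

lemma mmul_mtrans_TR_OmegaAB:
  assumes "mu < 2^N" "R \<in> SOm m" "phi \<in> OmegaAB N m"
  shows "mmul (dimD N m) phi (mtrans (TR N m mu R)) \<in> OmegaAB N m"
  using assms(3)
proof (rule OmegaAB_linear_image[OF mmul_lin_right])
  fix v w assume "v \<in> omegaL N m" "w \<in> omegaL N m"
  then show "mmul (dimD N m) (tens v w) (mtrans (TR N m mu R)) \<in> OmegaAB N m"
    by (simp add: mmul_tens_mtrans omegaL_D(2) tens_OmegaAB mvec_TR_omegaL[OF assms(2)])
next
  fix nu :: nat assume "nu < 2^N"
  then show "mmul (dimD N m) (Phi N nu) (mtrans (TR N m mu R)) \<in> OmegaAB N m"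
    using assms(1) by (simp add: mmul_Phi_mtrans_TR Phi_OmegaAB xor_less_power)
qed

lemma Tset_preserves:
  assumes "T \<in> Tset N m"
  shows "v \<in> omegaL N m \<Longrightarrow> mvec (dimD N m) T v \<in> omegaL N m"
    and "phi \<in> OmegaAB N m \<Longrightarrow> mmul (dimD N m) T phi \<in> OmegaAB N m"
    and "phi \<in> OmegaAB N m \<Longrightarrow> mmul (dimD N m) phi (mtrans T) \<in> OmegaAB N m"
  using assms mvec_TR_omegaL mmul_TR_OmegaAB mmul_mtrans_TR_OmegaAB unfolding Tset_def by auto

section \<open>Rotations connecting pure local states\<close>

text \<open>The rotation by \<open>\<theta>\<close> in the plane spanned by orthonormal \<open>a, b\<close>, fixing its orthogonal
  complement: \<open>I + (cos \<theta> - 1)(a a\<^sup>t + b b\<^sup>t) + sin \<theta> (b a\<^sup>t - a b\<^sup>t)\<close>.\<close>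

definition plane_rotation :: "nat \<Rightarrow> (nat \<Rightarrow> real) \<Rightarrow> (nat \<Rightarrow> real) \<Rightarrow> real \<Rightarrow> nat \<Rightarrow> nat \<Rightarrow> real" where
  "plane_rotation m a b \<theta> = (\<lambda>i j. if i < m \<and> j < m then
      idm m i j + (cos \<theta> - 1) * (a i * a j + b i * b j) + sin \<theta> * (b i * a j - a i * b j) else 0)"

lemma plane_rotation_0: "plane_rotation m a b 0 = idm m"
  by (auto simp: plane_rotation_def idm_def intro!: ext)

lemma supp_mat_plane_rotation: "supp_mat m (plane_rotation m a b \<theta>)"
  by (simp add: supp_mat_def plane_rotation_def)

lemma continuous_on_plane_rotation: "continuous_on S (\<lambda>t. plane_rotation m a b (t * \<theta>) i j)"
  unfolding plane_rotation_def by (cases "i < m \<and> j < m") (auto intro!: continuous_intros)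

lemma sum_bilinear_expand3:
  fixes X1 X2 X3 Y1 Y2 Y3 :: "nat \<Rightarrow> real"
  shows "(\<Sum>k\<in>K. (X1 k + c1 * X2 k + c2 * X3 k) * (Y1 k + d1 * Y2 k + d2 * Y3 k))
   = (\<Sum>k\<in>K. X1 k * Y1 k) + d1 * (\<Sum>k\<in>K. X1 k * Y2 k) + d2 * (\<Sum>k\<in>K. X1 k * Y3 k)
   + c1 * (\<Sum>k\<in>K. X2 k * Y1 k) + c1 * d1 * (\<Sum>k\<in>K. X2 k * Y2 k) + c1 * d2 * (\<Sum>k\<in>K. X2 k * Y3 k)
   + c2 * (\<Sum>k\<in>K. X3 k * Y1 k) + c2 * d1 * (\<Sum>k\<in>K. X3 k * Y2 k) + c2 * d2 * (\<Sum>k\<in>K. X3 k * Y3 k)"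
  by (simp add: algebra_simps sum.distrib sum_distrib_left)

locale orthonormal_pair =
  fixes m :: nat and a b :: "nat \<Rightarrow> real"
  assumes aa: "(\<Sum>k<m. a k * a k) = 1" and bb: "(\<Sum>k<m. b k * b k) = 1"
    and ab: "(\<Sum>k<m. a k * b k) = 0"
begin

lemma ba: "(\<Sum>k<m. b k * a k) = 0"
  using ab by (simp add: mult.commute)

lemma plane_rotation_altdef:
  "i < m \<Longrightarrow> j < m \<Longrightarrow> plane_rotation m a b \<theta> i j
    = idm m i j + ((cos \<theta> - 1) * a j - sin \<theta> * b j) * a i + ((cos \<theta> - 1) * b j + sin \<theta> * a j) * b i"
  by (simp add: plane_rotation_def algebra_simps)

lemma plane_rotation_orthogonal:
  assumes i: "i < m" and j: "j < m"
  shows "(\<Sum>k<m. plane_rotation m a b \<theta> k i * plane_rotation m a b \<theta> k j) = (if i = j then 1 else 0)"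
proof -
  define A where "A = (\<lambda>j. (cos \<theta> - 1) * a j - sin \<theta> * b j)"
  define B where "B = (\<lambda>j. (cos \<theta> - 1) * b j + sin \<theta> * a j)"
  have "(\<Sum>k<m. plane_rotation m a b \<theta> k i * plane_rotation m a b \<theta> k j)
      = (\<Sum>k<m. (idm m k i + A i * a k + B i * b k) * (idm m k j + A j * a k + B j * b k))"
    by (rule sum.cong) (use i j in \<open>simp_all add: plane_rotation_altdef A_def B_def\<close>)
  also have "\<dots> = (if i = j then 1 else 0)
      + (A j * a i + B j * b i + A i * a j + A i * A j + B i * b j + B i * B j)"
    unfolding sum_bilinear_expand3 sum_idm_mult_idm[OF i j] sum_idm_mult[OF i] sum_mult_idm[OF j]
      aa bb ab ba by simp
  also have "A j * a i + B j * b i + A i * a j + A i * A j + B i * b j + B i * B j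
      = ((sin \<theta>)^2 + (cos \<theta>)^2 - 1) * (a i * a j + b i * b j)"
  proof -
    have "((c - 1) * aj - s * bj) * ai + ((c - 1) * bj + s * aj) * bi + ((c - 1) * ai - s * bi) * aj
      + ((c - 1) * ai - s * bi) * ((c - 1) * aj - s * bj) + ((c - 1) * bi + s * ai) * bj
      + ((c - 1) * bi + s * ai) * ((c - 1) * bj + s * aj) = (s^2 + c^2 - 1) * (ai * aj + bi * bj)"
      for c s ai aj bi bj :: real
      by (simp add: algebra_simps power2_eq_square)
    then show ?thesis unfolding A_def B_def .
  qed
  finally show ?thesis by simp
qed

lemma plane_rotation_apply_a:
  assumes i: "i < m"
  shows "(\<Sum>j<m. plane_rotation m a b \<theta> i j * a j) = cos \<theta> * a i + sin \<theta> * b i"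
proof -
  define A where "A = (\<lambda>j. (cos \<theta> - 1) * a j - sin \<theta> * b j)"
  define B where "B = (\<lambda>j. (cos \<theta> - 1) * b j + sin \<theta> * a j)"
  have "(\<Sum>j<m. plane_rotation m a b \<theta> i j * a j)
      = (\<Sum>j<m. idm m i j * a j + a i * (A j * a j) + b i * (B j * a j))"
    by (rule sum.cong) (use i in \<open>auto simp: plane_rotation_altdef A_def B_def algebra_simps\<close>)
  also have "\<dots> = (\<Sum>j<m. idm m i j * a j) + a i * (\<Sum>j<m. A j * a j) + b i * (\<Sum>j<m. B j * a j)"
    by (simp add: sum.distrib sum_distrib_left)
  also have "(\<Sum>j<m. idm m i j * a j) = a i"
  proof -
    have "(\<Sum>j<m. idm m i j * a j) = (\<Sum>j<m. if j = i then a i else 0)"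
      by (rule sum.cong) (auto simp: idm_def)
    then show ?thesis using i by simp
  qed
  also have "(\<Sum>j<m. A j * a j) = (cos \<theta> - 1) * (\<Sum>j<m. a j * a j) - sin \<theta> * (\<Sum>j<m. b j * a j)"
    by (simp add: A_def left_diff_distrib sum_subtractf sum_distrib_left mult.assoc)
  also have "(\<Sum>j<m. B j * a j) = (cos \<theta> - 1) * (\<Sum>j<m. b j * a j) + sin \<theta> * (\<Sum>j<m. a j * a j)"
    by (simp add: B_def distrib_right sum.distrib sum_distrib_left mult.assoc)
  finally show ?thesis by (simp add: aa ab ba algebra_simps)
qed

text \<open>The determinant is continuous in the angle, squares to \<open>1\<close> and equals \<open>1\<close> at angle \<open>0\<close>.\<close>

lemma plane_rotation_SOm: "plane_rotation m a b \<theta> \<in> SOm m"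
proof -
  let ?f = "\<lambda>t. ldet m (plane_rotation m a b (t * \<theta>))"
  have sq: "?f t * ?f t = 1" for t
    by (rule ldet_orthogonal_square) (simp add: plane_rotation_orthogonal)
  have cont: "continuous_on {0..1} ?f"
    unfolding ldet_def by (intro continuous_intros continuous_on_plane_rotation)
  have f0: "?f 0 = 1" using idm_SOm[of m] by (simp add: plane_rotation_0 SOm_iff)
  have "?f 1 = 1"
  proof (rule ccontr)
    assume "?f 1 \<noteq> 1"
    then have "?f 1 = -1" using sq[of 1] square_eq_1_iff by blast
    then obtain t where "?f t = 0" using IVT2'[of ?f 1 0 0] cont f0 by auto
    then show False using sq[of t] by simp
  qed
  then show ?thesis
    unfolding SOm_iff using supp_mat_plane_rotation plane_rotation_orthogonal by simp
qed

end

lemma sum_lessThan_two: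
  fixes f :: "nat \<Rightarrow> real"
  assumes "2 \<le> m" "\<And>i. 2 \<le> i \<Longrightarrow> f i = 0"
  shows "(\<Sum>i<m. f i) = f 0 + f 1"
proof -
  have "m = 2 + (m - 2)" using assms(1) by simp
  then have "(\<Sum>i<m. f i) = (\<Sum>i<2. f i) + (\<Sum>j<m - 2. f (2 + j))"
    by (metis sum_lessThan_add)
  then show ?thesis using assms(2) by (simp add: numeral_2_eq_2)
qed

lemma orthonormal_pair_exists:
  assumes m: "2 \<le> m" and aa: "(\<Sum>k<m. a k * a k) = 1"
  shows "\<exists>b. orthonormal_pair m a b"
proof (cases "a 0 = 0")
  case True
  define b where "b = (\<lambda>i::nat. if i = 0 then (1::real) else 0)"
  have "(\<Sum>k<m. b k * b k) = 1" "(\<Sum>k<m. a k * b k) = 0"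
    using m True by (simp_all add: b_def if_distrib sum.delta cong: if_cong)
  then show ?thesis using aa by (auto simp: orthonormal_pair_def)
next
  case False
  define r where "r = sqrt (a 0 * a 0 + a 1 * a 1)"
  have "0 < a 0 * a 0" using False by (auto simp: zero_less_mult_iff linorder_neq_iff)
  then have r_pos: "0 < r" and r_sq: "r * r = a 0 * a 0 + a 1 * a 1"
    unfolding r_def by (simp_all add: add_pos_nonneg)
  define b where "b = (\<lambda>i::nat. if i = 0 then - a 1 / r else if i = 1 then a 0 / r else 0)"
  have "(\<Sum>k<m. b k * b k) = (a 1 * a 1 + a 0 * a 0) / (r * r)"
    by (subst sum_lessThan_two[OF m]) (simp_all add: b_def add_divide_distrib)
  then have "(\<Sum>k<m. b k * b k) = 1" using r_pos r_sq False by (simp add: add.commute)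
  moreover have "(\<Sum>k<m. a k * b k) = 0"
    by (subst sum_lessThan_two[OF m]) (simp_all add: b_def field_simps)
  ultimately show ?thesis using aa by (auto simp: orthonormal_pair_def)
qed

lemma unit_vector_in_rotation_plane:
  assumes m: "2 \<le> m" and aa: "(\<Sum>k<m. a k * a k) = 1" and bb: "(\<Sum>k<m. b' k * b' k) = 1"
  shows "\<exists>b \<theta>. orthonormal_pair m a b \<and> (\<forall>i<m. b' i = cos \<theta> * a i + sin \<theta> * b i)"
proof -
  define c where "c = (\<Sum>k<m. a k * b' k)"
  have "\<bar>c\<bar> \<le> 1" unfolding c_def
    by (rule abs_sum_mult_le_1) (use aa bb in \<open>simp_all add: power2_eq_square\<close>)
  define v where "v = (\<lambda>k. b' k - c * a k)"
  have vv: "(\<Sum>k<m. v k * v k) = 1 - c^2"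
  proof -
    have "(\<Sum>k<m. v k * v k) = (\<Sum>k<m. b' k * b' k) - 2 * c * (\<Sum>k<m. a k * b' k) + c * c * (\<Sum>k<m. a k * a k)"
      unfolding v_def by (simp add: algebra_simps sum_subtractf sum.distrib sum_distrib_left)
    then show ?thesis using aa bb by (simp add: c_def[symmetric] power2_eq_square)
  qed
  have av: "(\<Sum>k<m. a k * v k) = 0"
  proof -
    have "(\<Sum>k<m. a k * v k) = (\<Sum>k<m. a k * b' k) - c * (\<Sum>k<m. a k * a k)"
      unfolding v_def by (simp add: algebra_simps sum_subtractf sum_distrib_left)
    then show ?thesis using aa by (simp add: c_def[symmetric])
  qed
  define \<theta> where "\<theta> = arccos c"
  have cos_\<theta>: "cos \<theta> = c" and sin_\<theta>: "sin \<theta> = sqrt (1 - c^2)"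
    unfolding \<theta>_def using \<open>\<bar>c\<bar> \<le> 1\<close> by (auto simp: sin_arccos)
  show ?thesis
  proof (cases "c^2 < 1")
    case True
    define s where "s = sqrt (1 - c^2)"
    have s_pos: "0 < s" and s_sq: "s * s = 1 - c^2" using True by (simp_all add: s_def)
    define b where "b = (\<lambda>k. v k / s)"
    have "(\<Sum>k<m. b k * b k) = 1"
      using vv s_sq s_pos True by (simp add: b_def sum_divide_distrib[symmetric])
    moreover have "(\<Sum>k<m. a k * b k) = 0" using av by (simp add: b_def sum_divide_distrib[symmetric])
    moreover have "\<forall>i<m. b' i = cos \<theta> * a i + sin \<theta> * b i"
      using s_pos by (simp add: cos_\<theta> sin_\<theta> s_def[symmetric] b_def v_def)
    ultimately show ?thesis using aa by (auto simp: orthonormal_pair_def)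
  next
    case False
    have "c^2 \<le> 1" using \<open>\<bar>c\<bar> \<le> 1\<close> by (simp add: abs_square_le_1)
    then have c_sq: "c^2 = 1" using False by linarith
    then have "\<forall>k<m. v k * v k = 0"
      using vv sum_nonneg_eq_0_iff[of "{..<m}" "\<lambda>k. v k * v k"] by simp
    then have "\<forall>i<m. b' i = cos \<theta> * a i + sin \<theta> * b i" for b
      using c_sq by (simp add: cos_\<theta> sin_\<theta> v_def)
    then show ?thesis using orthonormal_pair_exists[OF m aa] by blast
  qed
qed

definition bloch_unit :: "nat \<Rightarrow> nat \<Rightarrow> real" where
  "bloch_unit N = (\<lambda>i. if i = 2^N then 1 else 0)"

lemma omegaL_add_bloch_unit:
  assumes v: "v \<in> omegaL N m" and m: "1 \<le> m"
    and c: "(\<Sum>i<m. (v (2^N + i))^2) + 3 * \<bar>c\<bar> \<le> 1" "\<bar>c\<bar> \<le> 1"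
  shows "v + c *\<^sub>R bloch_unit N \<in> omegaL N m"
proof -
  let ?s = "\<Sum>i<m. (v (2^N + i))^2"
  have "(v (2^N + 0))^2 \<le> ?s" by (rule member_le_sum) (use m in auto)
  then have "(v (2^N))^2 \<le> 1" using omegaL_D(3)[OF v] by simp
  then have v_le: "\<bar>v (2^N)\<bar> \<le> 1" by (simp add: abs_square_le_1)
  have "c * v (2^N) \<le> \<bar>c\<bar> * \<bar>v (2^N)\<bar>" by (metis abs_ge_self abs_mult)
  also have "\<dots> \<le> \<bar>c\<bar>" using mult_left_le[OF v_le abs_ge_zero] .
  finally have cv: "c * v (2^N) \<le> \<bar>c\<bar>" .
  have cc: "c * c \<le> \<bar>c\<bar>" using mult_left_le[OF c(2) abs_ge_zero[of c]] by simp
  have "(\<Sum>i<m. ((v + c *\<^sub>R bloch_unit N) (2^N + i))^2)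
      = (\<Sum>i<m. (v (2^N + i))^2 + (if i = 0 then 2 * (c * v (2^N)) + c * c else 0))"
    by (rule sum.cong) (auto simp: bloch_unit_def power2_eq_square algebra_simps)
  also have "\<dots> = ?s + (2 * (c * v (2^N)) + c * c)" using m by (simp add: sum.distrib)
  finally have "(\<Sum>i<m. ((v + c *\<^sub>R bloch_unit N) (2^N + i))^2) \<le> 1"
    using cv cc c(1) by linarith
  then show ?thesis
    using omegaL_D[OF v] m unfolding omegaL_def supp_vec_def vanishes_mid_def
    by (auto simp: bloch_unit_def dimD_def)
qed

lemma extreme_point_omegaL_D:
  assumes m: "1 \<le> m" and w: "w extreme_point_of omegaL N m"
  shows "w \<in> omegaL N m" "(\<Sum>i<m. (w (2^N + i))^2) = 1"
proof -
  show w_in: "w \<in> omegaL N m" using w by (simp add: extreme_point_of_def)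
  define s where "s = (\<Sum>i<m. (w (2^N + i))^2)"
  show "s = 1" unfolding s_def[symmetric]
  proof (rule ccontr)
    assume "s \<noteq> 1"
    then have "s < 1" using omegaL_D(3)[OF w_in] by (simp add: s_def)
    define \<epsilon> where "\<epsilon> = (1 - s) / 3"
    have "0 \<le> s" unfolding s_def by (simp add: sum_nonneg)
    then have \<epsilon>: "0 < \<epsilon>" "s + 3 * \<bar>\<epsilon>\<bar> \<le> 1" "\<bar>\<epsilon>\<bar> \<le> 1" using \<open>s < 1\<close> by (auto simp: \<epsilon>_def abs_of_pos field_simps)
    let ?p = "w + \<epsilon> *\<^sub>R bloch_unit N" and ?q = "w + (- \<epsilon>) *\<^sub>R bloch_unit N"
    have p: "?p \<in> omegaL N m" and q: "?q \<in> omegaL N m"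
      using omegaL_add_bloch_unit[OF w_in m, of \<epsilon>] omegaL_add_bloch_unit[OF w_in m, of "- \<epsilon>"] \<epsilon>
      by (simp_all add: s_def)
    have "?p \<noteq> ?q"
      using fun_cong[of ?p ?q "2^N"] \<epsilon>(1) by (auto simp: bloch_unit_def)
    then have "midpoint ?p ?q \<in> open_segment ?p ?q" by (rule midpoint_in_open_segment[THEN iffD2])
    moreover have "midpoint ?p ?q = w"
      by (auto simp: midpoint_def algebra_simps intro!: ext)
    ultimately have "w \<in> open_segment ?p ?q" by (simp only:)
    then show False using w p q unfolding extreme_point_of_def by blast
  qed
qed

lemma mvec_TR_0_extreme_point:
  assumes "w \<in> omegaL N m" "w' \<in> omegaL N m"
    and "\<forall>j<m. (\<Sum>l<m. R j l * w (2^N + l)) = w' (2^N + j)"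
  shows "mvec (dimD N m) (TR N m 0 R) w = w'"
proof (rule ext)
  fix i
  note wD = omegaL_D[OF assms(1)] and wD' = omegaL_D[OF assms(2)]
  consider "i < 2^N" | j where "i = 2^N + j" "j < m" | "dimD N m \<le> i"
    unfolding dimD_def by (metis add_less_cancel_left le_Suc_ex not_less)
  then show "mvec (dimD N m) (TR N m 0 R) w i = w' i"
  proof cases
    case 1
    then show ?thesis using wD wD' by (cases "i = 0") (auto simp: mvec_TR_low vanishes_mid_def)
  next
    case 2
    then show ?thesis using assms(3) by (simp add: mvec_TR_block)
  next
    case 3
    then show ?thesis using wD' by (simp add: mvec_beyond_dim vanishes_mid_def)
  qed
qed

lemma extreme_points_connected_by_rotations:
  assumes m: "2 \<le> m" and w: "w extreme_point_of omegaL N m" and w': "w' extreme_point_of omegaL N m"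
  shows "\<exists>g :: real \<Rightarrow> nat \<Rightarrow> nat \<Rightarrow> real.
            (\<forall>t\<in>{0..1}. g t \<in> SOm m) \<and> (\<forall>i j. continuous_on {0..1} (\<lambda>t. g t i j))
            \<and> g 0 = idm m \<and> mvec (dimD N m) (TR N m 0 (g 1)) w = w'"
proof -
  have m1: "1 \<le> m" using m by simp
  define a where "a = (\<lambda>i. w (2^N + i))"
  define b' where "b' = (\<lambda>i. w' (2^N + i))"
  have "(\<Sum>k<m. a k * a k) = 1" "(\<Sum>k<m. b' k * b' k) = 1"
    using extreme_point_omegaL_D(2)[OF m1 w] extreme_point_omegaL_D(2)[OF m1 w']
    by (simp_all add: a_def b'_def power2_eq_square)
  then obtain b \<theta> where onb: "orthonormal_pair m a b"
    and b': "\<forall>i<m. b' i = cos \<theta> * a i + sin \<theta> * b i"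
    using unit_vector_in_rotation_plane[OF m] by blast
  define g where "g = (\<lambda>t. plane_rotation m a b (t * \<theta>))"
  show ?thesis
  proof (intro exI[of _ g] conjI)
    show "\<forall>t\<in>{0..1}. g t \<in> SOm m"
      by (simp add: g_def orthonormal_pair.plane_rotation_SOm[OF onb])
    show "\<forall>i j. continuous_on {0..1} (\<lambda>t. g t i j)"
      by (simp add: g_def continuous_on_plane_rotation)
    show "g 0 = idm m" by (simp add: g_def plane_rotation_0)
    show "mvec (dimD N m) (TR N m 0 (g 1)) w = w'"
      by (rule mvec_TR_0_extreme_point)
        (use extreme_point_omegaL_D(1)[OF m1] w w' b' orthonormal_pair.plane_rotation_apply_a[OF onb]
           in \<open>auto simp: g_def a_def b'_def\<close>)
  qed
qed

section \<open>Mutual information\<close>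

lemma mutual_info_noiseless:
  assumes "0 < k" and W: "\<And>x y. x < k \<Longrightarrow> y < k \<Longrightarrow> W x y = (if y = x then 1 else 0)"
  shows "mutual_info k k (\<lambda>x. 1 / k) W = log 2 k"
proof -
  have q: "(\<Sum>x'<k. 1 / k * W x' y) = 1 / k" if "y < k" for y
  proof -
    have "(\<Sum>x'<k. 1 / k * W x' y) = (\<Sum>x'<k. if x' = y then 1 / k else 0)"
      by (rule sum.cong) (use that W in auto)
    then show ?thesis using that by simp
  qed
  have "mutual_info k k (\<lambda>x. 1 / k) W = (\<Sum>x<k. \<Sum>y<k. if y = x then 1 / k * log 2 k else 0)"
    unfolding mutual_info_def
  proof (intro sum.cong refl)
    fix x y assume "x \<in> {..<k}" "y \<in> {..<k}"
    then show "1 / k * W x y * log 2 (W x y / (\<Sum>x'<k. 1 / k * W x' y))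
        = (if y = x then 1 / k * log 2 k else 0)"
      using q[of y] W[of x y] by simp
  qed
  also have "\<dots> = log 2 k" using \<open>0 < k\<close> by simp
  finally show ?thesis .
qed

lemma mult_log_ratio_le: "0 < q \<Longrightarrow> 0 < a \<Longrightarrow> q * log 2 (a / q) \<le> (a - q) / ln 2"
proof -
  assume q: "0 < q" and a: "0 < a"
  have "q * ln (a / q) \<le> q * (a / q - 1)"
    using q a by (intro mult_left_mono ln_le_minus_one) simp_all
  also have "\<dots> = a - q" using q by (simp add: field_simps)
  finally show ?thesis by (simp add: log_def divide_right_mono)
qed

text \<open>Each output probability \<open>q\<^sub>y\<close> is at most \<open>c a\<^sub>y\<close>, so outcome \<open>y\<close> carries at most \<open>log c\<close>
  plus a relative entropy term \<open>q\<^sub>y log (a\<^sub>y / q\<^sub>y)\<close>, and these sum to at most zero.\<close>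

lemma mutual_info_le_log:
  fixes p a :: "nat \<Rightarrow> real" and W :: "nat \<Rightarrow> nat \<Rightarrow> real"
  assumes p0: "\<And>x. x < k \<Longrightarrow> 0 \<le> p x" and p1: "(\<Sum>x<k. p x) = 1"
    and W0: "\<And>x y. x < k \<Longrightarrow> y < l \<Longrightarrow> 0 \<le> W x y"
    and W1: "\<And>x. x < k \<Longrightarrow> (\<Sum>y<l. W x y) = 1"
    and a0: "\<And>y. y < l \<Longrightarrow> 0 \<le> a y" and a1: "(\<Sum>y<l. a y) = 1"
    and c: "0 < c" and W_le: "\<And>x y. x < k \<Longrightarrow> y < l \<Longrightarrow> W x y \<le> c * a y"
  shows "mutual_info k l p W \<le> log 2 c"
proof -
  define q where "q = (\<lambda>y. \<Sum>x<k. p x * W x y)"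
  have q0: "0 \<le> q y" if "y < l" for y
    unfolding q_def using p0 W0 that by (auto intro!: sum_nonneg)
  have q1: "(\<Sum>y<l. q y) = 1"
  proof -
    have "(\<Sum>y<l. q y) = (\<Sum>x<k. p x * (\<Sum>y<l. W x y))"
      unfolding q_def by (simp add: sum_distrib_left sum.swap[of _ "{..<l}"])
    then show ?thesis using p1 W1 by simp
  qed
  have q_le: "q y \<le> c * a y" if y: "y < l" for y
  proof -
    have "q y \<le> (\<Sum>x<k. p x * (c * a y))" unfolding q_def
      by (rule sum_mono) (use p0 W_le y in \<open>auto intro: mult_left_mono\<close>)
    also have "\<dots> = c * a y" using p1 by (simp flip: sum_distrib_right)
    finally show ?thesis .
  qed
  have per_outcome: "(\<Sum>x<k. p x * W x y * log 2 (W x y / q y)) \<le> q y * log 2 c + (a y - q y) / ln 2"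
    if y: "y < l" for y
  proof (cases "q y = 0")
    case True
    then have "\<forall>x\<in>{..<k}. p x * W x y = 0"
      using sum_nonneg_eq_0_iff[of "{..<k}" "\<lambda>x. p x * W x y"] p0 W0 y unfolding q_def by auto
    then have "(\<Sum>x<k. p x * W x y * log 2 (W x y / q y)) = 0" by (intro sum.neutral) simp
    then show ?thesis using True a0[OF y] by simp
  next
    case False
    then have q_pos: "0 < q y" using q0[OF y] by simp
    then have "0 < c * a y" using q_le[OF y] by linarith
    then have a_pos: "0 < a y" using c by (simp add: zero_less_mult_iff)
    have "p x * W x y * log 2 (W x y / q y) \<le> p x * W x y * (log 2 c + log 2 (a y / q y))"
      if x: "x < k" for x
    proof (cases "p x * W x y = 0")
      case False
      then have W_pos: "0 < W x y" and pW_pos: "0 < p x * W x y"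
        using p0[OF x] W0[OF x y] by (auto simp: less_le)
      have "log 2 (W x y / q y) = log 2 (W x y / (c * a y)) + log 2 c + log 2 (a y / q y)"
        using W_pos a_pos q_pos c by (simp add: log_divide log_mult)
      moreover have "log 2 (W x y / (c * a y)) \<le> 0"
        using W_le[OF x y] W_pos a_pos c by (simp add: divide_le_eq)
      ultimately show ?thesis using pW_pos by (simp add: mult_left_mono)
    qed auto
    then have "(\<Sum>x<k. p x * W x y * log 2 (W x y / q y))
        \<le> (\<Sum>x<k. p x * W x y * (log 2 c + log 2 (a y / q y)))"
      by (intro sum_mono) simp
    also have "\<dots> = q y * (log 2 c + log 2 (a y / q y))"
      by (simp only: q_def sum_distrib_right)
    also have "\<dots> = q y * log 2 c + q y * log 2 (a y / q y)"
      by (simp add: distrib_left)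
    finally show ?thesis using mult_log_ratio_le[OF q_pos a_pos] by linarith
  qed
  have "mutual_info k l p W = (\<Sum>y<l. \<Sum>x<k. p x * W x y * log 2 (W x y / q y))"
    unfolding mutual_info_def q_def by (rule sum.swap)
  also have "\<dots> \<le> (\<Sum>y<l. q y * log 2 c + (a y - q y) / ln 2)"
    by (rule sum_mono) (simp add: per_outcome)
  also have "\<dots> = log 2 c" using q1 a1
    by (simp add: sum.distrib sum_subtractf flip: sum_distrib_right sum_divide_distrib)
  finally show ?thesis .
qed

lemma mutual_info_local_le_1:
  assumes "\<forall>x<k. 0 \<le> p x" "(\<Sum>x<k. p x) = 1" "\<forall>x<k. \<omega> x \<in> omegaL N m"
    and e: "\<forall>y<l. e y \<in> Eloc N m" "(\<Sum>y<l. e y) = unitE"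
  shows "mutual_info k l p (\<lambda>x y. vdot (dimD N m) (e y) (\<omega> x)) \<le> 1"
proof -
  have "(\<Sum>y<l. e y 0) = 1"
    using fun_cong[OF e(2), of 0] by (simp add: sum_fun_apply unitE_def)
  moreover have "(\<Sum>y<l. vdot (dimD N m) (e y) (\<omega> x)) = 1" if "x < k" for x
    using vdot_sum[of "dimD N m" e "{..<l}" "\<omega> x"] e(2) vdot_unitE assms(3) that by simp
  ultimately have "mutual_info k l p (\<lambda>x y. vdot (dimD N m) (e y) (\<omega> x)) \<le> log 2 2"
    by (intro mutual_info_le_log[where a="\<lambda>y. e y 0"]) (use assms Eloc_D in auto)
  then show ?thesis by simp
qed

text \<open>Two antipodal pure states decoded by the two matching half-effects attain one bit.\<close>

lemma capacity_omegaL: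
  assumes m: "1 \<le> m"
  shows "capacity (omegaL N m) (Eloc N m) unitE (vdot (dimD N m)) = 1"
proof -
  define r where "r = (\<lambda>y::nat. \<lambda>i::nat. if i = 0 then (if y = 0 then 1 else -1) else (0::real))"
  define \<omega> where "\<omega> = (\<lambda>x i::nat. if i = 0 then 1 else if i = 2^N then r x 0 else 0)"
  define e where "e = (\<lambda>y. halfvec N m (r y))"
  have r: "(\<Sum>i<m. (r y i)^2) = 1" for y
  proof -
    have "(\<Sum>i<m. (r y i)^2) = (\<Sum>i<m. if i = 0 then 1 else 0)"
      by (rule sum.cong) (auto simp: r_def)
    then show ?thesis using m by simp
  qed
  have \<omega>: "\<omega> x \<in> omegaL N m" for x
  proof -
    have "(\<Sum>i<m. (\<omega> x (2^N + i))^2) = (\<Sum>i<m. (r x i)^2)"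
      by (rule sum.cong) (auto simp: \<omega>_def r_def)
    then show ?thesis using r unfolding omegaL_def supp_vec_def by (auto simp: \<omega>_def dimD_def)
  qed
  have e: "e y \<in> Eloc N m" for y
    unfolding e_def Eloc_def by (rule hull_inc) (use r in blast)
  have e_sum: "(\<Sum>y<2. e y) = unitE"
    by (auto simp: sum_fun_apply numeral_2_eq_2 e_def halfvec_def r_def unitE_def intro!: ext)
  have W: "vdot (dimD N m) (e y) (\<omega> x) = (if y = x then 1 else 0)" if "x < 2" "y < 2" for x y
  proof -
    have "(\<Sum>j<m. r y j * \<omega> x (2^N + j)) = (\<Sum>j<m. if j = 0 then r y 0 * r x 0 else 0)"
      by (rule sum.cong) (auto simp: r_def \<omega>_def)
    then have "vdot (dimD N m) (e y) (\<omega> x) = 1/2 + r y 0 * r x 0 / 2"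
      unfolding e_def using vdot_halfvec[OF \<omega>] m by simp
    then show ?thesis using that by (auto simp: r_def less_2_cases_iff)
  qed
  let ?S = "{mutual_info k l p (\<lambda>x y. vdot (dimD N m) (e y) (\<omega> x)) | k l p \<omega> e.
       0 < k \<and> (\<forall>x<k. 0 \<le> p x) \<and> (\<Sum>x<k. p x) = 1 \<and> (\<forall>x<k. \<omega> x \<in> omegaL N m)
       \<and> (\<forall>y<l. e y \<in> Eloc N m) \<and> (\<Sum>y<l. e y) = unitE}"
  have "mutual_info 2 2 (\<lambda>x. 1 / 2) (\<lambda>x y. vdot (dimD N m) (e y) (\<omega> x)) = 1"
    using mutual_info_noiseless[of 2 "\<lambda>x y. vdot (dimD N m) (e y) (\<omega> x)"] W by simp
  moreover have "(\<Sum>x<(2::nat). 1 / 2 :: real) = 1" by simp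
  ultimately have "1 \<in> ?S"
    using \<omega> e e_sum by (intro CollectI exI[of _ 2] exI[of _ "2::nat"] exI[of _ "\<lambda>x::nat. 1 / 2 :: real"]
        exI[of _ \<omega>] exI[of _ e]) auto
  moreover have "\<forall>z\<in>?S. z \<le> 1" using mutual_info_local_le_1 by blast
  ultimately show ?thesis unfolding capacity_def by (intro cSup_eq_maximum) auto
qed

theorem mainTheorem14:
  fixes N m :: nat
  assumes "2 \<le> N" and "1 \<le> m"
  defines "D \<equiv> dimD N m"
  shows
    \<comment> \<open>(a)\<close>
    "Lam N m = {Phi N mu | mu. mu < 2^N}
     \<and> tmin N m \<subseteq> OmegaAB N m \<and> OmegaAB N m \<subseteq> tmax N m
     \<comment> \<open>(b)\<close>
     \<and> (\<forall>T\<in>Tset N m. (\<forall>v\<in>omegaL N m. mvec D T v \<in> omegaL N m)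
          \<and> (\<forall>phi\<in>OmegaAB N m. mmul D T phi \<in> OmegaAB N m \<and> mmul D phi (mtrans T) \<in> OmegaAB N m))
     \<and> (2 \<le> m \<longrightarrow> (\<forall>w\<in>{w. w extreme_point_of omegaL N m}. \<forall>w'\<in>{w. w extreme_point_of omegaL N m}.
          \<exists>g :: real \<Rightarrow> nat \<Rightarrow> nat \<Rightarrow> real.
            (\<forall>t\<in>{0..1}. g t \<in> SOm m) \<and> (\<forall>i j. continuous_on {0..1} (\<lambda>t. g t i j))
            \<and> g 0 = idm m \<and> mvec D (TR N m 0 (g 1)) w = w'))
     \<comment> \<open>(c)\<close>
     \<and> (\<forall>e\<in>Eloc N m. \<forall>f\<in>Eloc N m. \<forall>mu<2^N. \<forall>nu<2^N.
          mdot D (tens e f) (Phi N mu) = mdot D (tens e f) (Phi N nu))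
     \<and> (\<forall>mu<2^N. \<forall>nu<2^N. mu \<noteq> nu \<longrightarrow> Phi N mu \<noteq> Phi N nu)
     \<comment> \<open>(d)\<close>
     \<and> (\<forall>y<2^N. Fy N y \<in> EAB N m)
     \<and> (\<Sum>y<2^N. Fy N y) = tens unitE unitE
     \<and> (\<forall>R\<in>SOm m. \<forall>x<2^N. \<forall>y<2^N.
          mdot D (Fy N y) (mmul D (TR N m x R) (Phi N 0)) = mdot D (Fy N y) (Phi N x)
          \<and> mdot D (Fy N y) (Phi N x) = (if y = x then 1 else 0))
     \<and> (\<forall>R\<in>SOm m. (\<forall>x<2^N. mmul D (TR N m x R) (Phi N 0) \<in> OmegaAB N m)
          \<and> mutual_info (2^N) (2^N) (\<lambda>x. 1 / 2^N)
              (\<lambda>x y. mdot D (Fy N y) (mmul D (TR N m x R) (Phi N 0))) = real N)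
     \<and> capacity (omegaL N m) (Eloc N m) unitE (vdot D) = 1"
proof -
  have local_blind: "mdot D (tens e f) (Phi N mu) = mdot D (tens e f) (Phi N nu)"
    if "e \<in> Eloc N m" "f \<in> Eloc N m" for e f mu nu
    unfolding D_def using that by (simp add: mdot_tens_Phi Eloc_D(1))
  have decoding: "mdot D (Fy N y) (mmul D (TR N m x R) (Phi N 0)) = (if y = x then 1 else 0)"
    if "x < 2^N" "y < 2^N" for x y R
    unfolding D_def using that by (simp add: mmul_TR_Phi_0 mdot_Fy_Phi)
  have "mutual_info (2^N) (2^N) (\<lambda>x. 1 / 2^N) (\<lambda>x y. mdot D (Fy N y) (mmul D (TR N m x R) (Phi N 0)))
      = real N" for R
    using mutual_info_noiseless[of "2^N" "\<lambda>x y. mdot D (Fy N y) (mmul D (TR N m x R) (Phi N 0))"]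
    by (simp add: decoding log_pow_cancel)
  moreover have "\<forall>T\<in>Tset N m. (\<forall>v\<in>omegaL N m. mvec D T v \<in> omegaL N m)
      \<and> (\<forall>phi\<in>OmegaAB N m. mmul D T phi \<in> OmegaAB N m \<and> mmul D phi (mtrans T) \<in> OmegaAB N m)"
    unfolding D_def using Tset_preserves by blast
  ultimately show ?thesis
    using Lam_eq tmin_subset_OmegaAB OmegaAB_subset_tmax local_blind Phi_inj Fy_EAB sum_Fy
      extreme_points_connected_by_rotations[of m _ N] Phi_OmegaAB capacity_omegaL[OF assms(2)]
    unfolding D_def by (auto simp: decoding[unfolded D_def] mmul_TR_Phi_0 mdot_Fy_Phi)
qed

end
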